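(* Let $\mathcal{H}$ be a complex Hilbert space and $A,B\in\mathcal{B}(\mathcal{H})$. Then for all $p\geq 1$, \[ \omega^{p}(A^{*}B) \leq \frac{1}{2} \|A\|^{p}\|B\|^{p} + \frac{1}{2} \omega^{p}(BA^{*}). \]
   Context: $\omega(T)=\sup\{|\langle Tx,x\rangle|:x\in\mathcal{H},\|x\|=1\}$ denotes the numerical radius and $\|\cdot\|$ the operator norm. *)

theory Defs
  imports "HOL-Analysis.Analysis"
begin

class complex_inner = real_normed_vector +
  fixes scaleC :: "complex \<Rightarrow> 'a \<Rightarrow> 'a"
    and cinner :: "'a \<Rightarrow> 'a \<Rightarrow> complex"
  assumes scaleC_add_right: "scaleC a (x + y) = scaleC a x + scaleC a y"
    and scaleC_add_left: "scaleC (a + b) x = scaleC a x + scaleC b x"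
    and scaleC_scaleC: "scaleC a (scaleC b x) = scaleC (a * b) x"
    and scaleC_one: "scaleC 1 x = x"
    and scaleR_scaleC: "scaleR r x = scaleC (complex_of_real r) x"
    and cinner_add_left: "cinner (x + y) z = cinner x z + cinner y z"
    and cinner_scaleC_left: "cinner (scaleC a x) y = a * cinner x y"
    and cinner_commute: "cinner x y = cnj (cinner y x)"
    and norm_eq_sqrt_cinner: "norm x = sqrt (Re (cinner x x))"

class chilbert_space = complex_inner + complete_space

definition bounded_clinear :: "('a::complex_inner \<Rightarrow> 'b::complex_inner) \<Rightarrow> bool" where
  "bounded_clinear T \<longleftrightarrow>
     (\<forall>x y. T (x + y) = T x + T y) \<and>
     (\<forall>c x. T (scaleC c x) = scaleC c (T x)) \<and>
     (\<exists>K. \<forall>x. norm (T x) \<le> norm x * K)"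

definition cadjoint :: "('a::complex_inner \<Rightarrow> 'a) \<Rightarrow> ('a \<Rightarrow> 'a)" where
  "cadjoint T = (THE S. \<forall>x y. cinner (T x) y = cinner x (S y))"

text \<open>Numerical radius; the 0 is only there so that the trivial space gets value 0
(sup of the empty set); otherwise it does not change the supremum.\<close>
definition numrad :: "('a::complex_inner \<Rightarrow> 'a) \<Rightarrow> real" where
  "numrad T = Sup (insert 0 {cmod (cinner (T x) x) | x. norm x = 1})"

end

theory Submission
  imports Defs
begin

text \<open>Since \<open>A\<^sup>*Bx\<close> paired with \<open>x\<close> is \<open>\<langle>Bx, Ax\<rangle>\<close>, for a unit vector \<open>x\<close> with \<open>Ax \<noteq> 0\<close>
and \<open>y = Ax / \<parallel>Ax\<parallel>\<close> it factors as \<open>\<langle>A\<^sup>*y, x\<rangle> \<langle>x, B\<^sup>*y\<rangle>\<close>. Buzano's inequality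
\<open>2 |\<langle>u, e\<rangle> \<langle>e, v\<rangle>| \<le> \<parallel>u\<parallel> \<parallel>v\<parallel> + |\<langle>u, v\<rangle>|\<close> for unit \<open>e\<close>, with \<open>u = A\<^sup>*y\<close>, \<open>v = B\<^sup>*y\<close>,
and \<open>\<langle>A\<^sup>*y, B\<^sup>*y\<rangle> = \<langle>BA\<^sup>*y, y\<rangle>\<close> give \<open>\<omega>(A\<^sup>*B) \<le> (\<parallel>A\<parallel> \<parallel>B\<parallel> + \<omega>(BA\<^sup>*)) / 2\<close>;
convexity of \<open>t \<mapsto> t\<^sup>p\<close> finishes the proof.
Adjoints exist by the Riesz representation theorem: the point of least norm on the
hyperplane \<open>f = 1\<close>, obtained from the parallelogram law and completeness, is orthogonal
to the kernel of \<open>f\<close>.\<close>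

section \<open>Complex inner product spaces\<close>

lemma cinner_zero_left [simp]: "cinner 0 (y::'a::complex_inner) = 0"
  using cinner_add_left[of 0 0 y] by simp

lemma cinner_zero_right [simp]: "cinner x (0::'a::complex_inner) = 0"
  by (metis cinner_commute cinner_zero_left complex_cnj_zero)

lemma cinner_minus_left: "cinner (- x) (y::'a::complex_inner) = - cinner x y"
  using cinner_add_left[of x "- x" y] minus_unique[of "cinner x y"] by simp

lemma cinner_diff_left: "cinner (x - z) (y::'a::complex_inner) = cinner x y - cinner z y"
  by (metis diff_conv_add_uminus cinner_add_left cinner_minus_left)

lemma cinner_add_right: "cinner x (y + z::'a::complex_inner) = cinner x y + cinner x z"
  by (metis cinner_commute cinner_add_left complex_cnj_add)

lemma cinner_diff_right: "cinner x (y - z::'a::complex_inner) = cinner x y - cinner x z"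
  by (metis cinner_commute cinner_diff_left complex_cnj_diff)

lemma cinner_scaleC_right: "cinner x (scaleC a y::'a::complex_inner) = cnj a * cinner x y"
  by (metis cinner_commute cinner_scaleC_left complex_cnj_mult complex_cnj_cnj)

lemma scaleC_minus_left: "scaleC (- a) (x::'a::complex_inner) = - scaleC a x"
proof -
  have "scaleC 0 x = 0"
    using scaleR_scaleC[of 0 x] by simp
  then show ?thesis
    using scaleC_add_left[of a "- a" x] minus_unique[of "scaleC a x"] by simp
qed

lemma cinner_self_eq_norm_power2: "cinner x (x::'a::complex_inner) = of_real ((norm x)\<^sup>2)"
proof -
  have "Im (cinner x x) = 0"
    using cinner_commute[of x x] by (metis cnj.sel(2) neg_equal_zero)
  moreover have "(norm x)\<^sup>2 = Re (cinner x x)"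
    using norm_eq_sqrt_cinner[of x] norm_ge_zero[of x] by simp
  ultimately show ?thesis by (simp add: complex_eq_iff)
qed

lemma norm_power2_eq_Re_cinner: "(norm (x::'a::complex_inner))\<^sup>2 = Re (cinner x x)"
  by (simp add: cinner_self_eq_norm_power2)

lemma norm_scaleC: "norm (scaleC a (x::'a::complex_inner)) = cmod a * norm x"
proof -
  have "cinner (scaleC a x) (scaleC a x) = a * cnj a * cinner x x"
    by (simp add: cinner_scaleC_left cinner_scaleC_right mult.assoc)
  then have "(norm (scaleC a x))\<^sup>2 = Re (a * cnj a * cinner x x)"
    by (simp only: norm_power2_eq_Re_cinner)
  also have "\<dots> = Re (of_real ((cmod a)\<^sup>2) * of_real ((norm x)\<^sup>2))"
    by (simp only: cinner_self_eq_norm_power2 complex_mult_cnj cmod_power2)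
  also have "\<dots> = (cmod a * norm x)\<^sup>2"
    by (simp only: Re_complex_of_real of_real_mult[symmetric] power_mult_distrib)
  finally show ?thesis by (simp add: power2_eq_iff_nonneg)
qed

lemma norm_add_scaleC_power2:
  "(norm (x + scaleC s (y::'a::complex_inner)))\<^sup>2
     = (norm x)\<^sup>2 + (cmod s)\<^sup>2 * (norm y)\<^sup>2 + 2 * Re (cnj s * cinner x y)"
proof -
  have "(norm (x + scaleC s y))\<^sup>2
      = Re (cinner x x + cnj s * cinner x y + s * cinner y x + s * cnj s * cinner y y)"
    by (simp add: norm_power2_eq_Re_cinner cinner_add_left cinner_add_right cinner_scaleC_left
        cinner_scaleC_right algebra_simps)
  also have "s * cinner y x = cnj (cnj s * cinner x y)"
    by (metis cinner_commute complex_cnj_cnj complex_cnj_mult)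
  finally show ?thesis
    by (simp add: cinner_self_eq_norm_power2 complex_mult_cnj cmod_power2 del: of_real_power)
qed

lemma norm_sub_projection_power2:
  fixes x y :: "'a::complex_inner"
  assumes "y \<noteq> 0"
  shows "(norm (x + scaleC (- (cinner x y / of_real ((norm y)\<^sup>2))) y))\<^sup>2
           = (norm x)\<^sup>2 - (cmod (cinner x y))\<^sup>2 / (norm y)\<^sup>2"
proof -
  define c n where "c = cinner x y" and "n = norm y"
  have "n > 0" using assms by (simp add: n_def)
  have "cmod (c / of_real (n\<^sup>2)) = cmod c / n\<^sup>2"
    by (simp add: norm_divide del: of_real_power)
  then have square_term: "(cmod (- (c / of_real (n\<^sup>2))))\<^sup>2 * n\<^sup>2 = (cmod c)\<^sup>2 / n\<^sup>2"
    using \<open>n > 0\<close> by (simp add: power_divide power2_eq_square)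
  have "cnj (- (c / of_real (n\<^sup>2))) * c = - (cnj c * c) / of_real (n\<^sup>2)"
    by (simp del: of_real_power)
  moreover have "cnj c * c = of_real ((cmod c)\<^sup>2)"
    by (simp only: complex_norm_square mult.commute)
  ultimately have cross_term: "Re (cnj (- (c / of_real (n\<^sup>2))) * c) = - ((cmod c)\<^sup>2 / n\<^sup>2)"
    by (simp only: of_real_minus[symmetric] of_real_divide[symmetric] Re_complex_of_real)
  show ?thesis
    unfolding norm_add_scaleC_power2 c_def[symmetric] n_def[symmetric]
    using square_term cross_term by linarith
qed

lemma norm_cinner_le: "cmod (cinner x y) \<le> norm x * norm (y::'a::complex_inner)"
proof (cases "y = 0")
  case False
  have "(cmod (cinner x y))\<^sup>2 / (norm y)\<^sup>2 \<le> (norm x)\<^sup>2"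
    using zero_le_power2[of "norm (x + scaleC (- (cinner x y / of_real ((norm y)\<^sup>2))) y)"]
    unfolding norm_sub_projection_power2[OF False] by linarith
  then have "(cmod (cinner x y))\<^sup>2 \<le> (norm x * norm y)\<^sup>2"
    using False by (simp add: pos_divide_le_eq power_mult_distrib)
  then show ?thesis by (rule power2_le_imp_le) simp
qed simp

lemma orthogonal_if_norm_minimal:
  fixes x y :: "'a::complex_inner"
  assumes "\<And>t. norm x \<le> norm (x + scaleC t y)"
  shows "cinner x y = 0"
proof (cases "y = 0")
  case False
  have "(norm x)\<^sup>2 \<le> (norm x)\<^sup>2 - (cmod (cinner x y))\<^sup>2 / (norm y)\<^sup>2"
    unfolding norm_sub_projection_power2[OF False, symmetric] by (rule power_mono[OF assms]) simp
  then show ?thesis using False by (simp add: divide_le_0_iff)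
qed simp

lemma parallelogram_law:
  fixes a b :: "'a::complex_inner"
  shows "(norm (a - b))\<^sup>2 + (norm (a + b))\<^sup>2 = 2 * (norm a)\<^sup>2 + 2 * (norm b)\<^sup>2"
proof -
  have "(norm (a + b))\<^sup>2 = (norm a)\<^sup>2 + (norm b)\<^sup>2 + 2 * Re (cinner a b)"
    using norm_add_scaleC_power2[of a 1 b] by (simp add: scaleC_one)
  moreover have "(norm (a - b))\<^sup>2 = (norm a)\<^sup>2 + (norm b)\<^sup>2 - 2 * Re (cinner a b)"
    using norm_add_scaleC_power2[of a "- 1" b] by (simp add: scaleC_minus_left scaleC_one)
  ultimately show ?thesis by simp
qed

text \<open>Reflecting \<open>u\<close> in the line through \<open>e\<close> gives \<open>w\<close> with \<open>\<parallel>w\<parallel> = \<parallel>u\<parallel>\<close> and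
  \<open>\<langle>w, v\<rangle> = 2 \<langle>u, e\<rangle> \<langle>e, v\<rangle> - \<langle>u, v\<rangle>\<close>; Cauchy--Schwarz for \<open>\<langle>w, v\<rangle>\<close> does the rest.\<close>
lemma Buzano_inequality:
  fixes u v e :: "'a::complex_inner"
  assumes "norm e = 1"
  shows "2 * cmod (cinner u e * cinner e v) \<le> norm u * norm v + cmod (cinner u v)"
proof -
  define w where "w = scaleC (2 * cinner u e) e - u"
  have "w = - (u + scaleC (- (2 * cinner u e)) e)"
    unfolding w_def by (simp add: scaleC_minus_left)
  then have "(norm w)\<^sup>2 = (norm (u + scaleC (- (2 * cinner u e)) e))\<^sup>2"
    by (simp only: norm_minus_cancel)
  also have "\<dots> = (norm u)\<^sup>2"
    unfolding norm_add_scaleC_power2 using assms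
    by (simp add: norm_mult power_mult_distrib, subst cmod_power2, simp add: power2_eq_square)
  finally have norm_w: "norm w = norm u" by (simp add: power2_eq_iff_nonneg)
  have "2 * (cinner u e * cinner e v) = cinner w v + cinner u v"
    unfolding w_def by (simp add: cinner_diff_left cinner_scaleC_left mult.assoc)
  then have "2 * cmod (cinner u e * cinner e v) = cmod (cinner w v + cinner u v)"
    by (metis norm_mult norm_numeral)
  also have "\<dots> \<le> cmod (cinner w v) + cmod (cinner u v)" by (rule norm_triangle_ineq)
  also have "\<dots> \<le> norm u * norm v + cmod (cinner u v)"
    using norm_cinner_le[of w v] norm_w by simp
  finally show ?thesis .
qed

section \<open>Riesz representation and adjoints\<close>

lemma bounded_clinear_imp_bounded_linear:
  assumes "bounded_clinear (T::'a::complex_inner \<Rightarrow> 'b::complex_inner)"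
  shows "bounded_linear T"
proof -
  from assms obtain K where "\<And>x. norm (T x) \<le> norm x * K"
    and "\<And>x y. T (x + y) = T x + T y" and "\<And>c x. T (scaleC c x) = scaleC c (T x)"
    unfolding bounded_clinear_def by blast
  then show ?thesis
    by (intro bounded_linear_intro[where K=K]) (auto simp: scaleR_scaleC)
qed

lemma minimizing_sequence_Cauchy:
  fixes xs :: "nat \<Rightarrow> 'a::complex_inner"
  assumes midpoint: "\<And>m n. 4 * d \<le> (norm (xs m + xs n))\<^sup>2"
    and near: "\<And>n. (norm (xs n))\<^sup>2 \<le> d + inverse (real (Suc n))"
  shows "Cauchy xs"
proof (rule metric_CauchyI)
  fix e :: real
  assume "e > 0"
  obtain M :: nat where M: "4 / e\<^sup>2 < real (Suc M)"
    using reals_Archimedean2 less_Suc_eq of_nat_less_iff by (metis less_trans)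
  have "dist (xs m) (xs n) < e" if "M \<le> m" "M \<le> n" for m n
  proof -
    have "(norm (xs m - xs n))\<^sup>2 \<le> 2 * inverse (real (Suc m)) + 2 * inverse (real (Suc n))"
      using parallelogram_law[of "xs m" "xs n"] midpoint[of m n] near[of m] near[of n] by linarith
    also have "\<dots> \<le> 4 * inverse (real (Suc M))"
    proof -
      have inverse_le: "inverse (real (Suc k)) \<le> inverse (real (Suc M))" if "M \<le> k" for k
        using that by (simp add: field_simps)
      show ?thesis
        using inverse_le[OF \<open>M \<le> m\<close>] inverse_le[OF \<open>M \<le> n\<close>] by linarith
    qed
    also have "\<dots> < e\<^sup>2"
      using M \<open>e > 0\<close> by (simp add: field_simps)
    finally show ?thesis
      using \<open>e > 0\<close> by (simp add: dist_norm power_less_imp_less_base)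
  qed
  then show "\<exists>M. \<forall>m\<ge>M. \<forall>n\<ge>M. dist (xs m) (xs n) < e" by blast
qed

lemma exists_min_norm_on_level_set:
  fixes f :: "'a::chilbert_space \<Rightarrow> complex"
  assumes f: "bounded_linear f" and "f x0 = 1"
  obtains w where "f w = 1" and "\<And>x. f x = 1 \<Longrightarrow> norm w \<le> norm x"
proof -
  have lin: "linear f"
    using f by (rule bounded_linear.linear)
  define d where "d = Inf ((\<lambda>x. (norm x)\<^sup>2) ` {x. f x = 1})"
  have d_le: "d \<le> (norm x)\<^sup>2" if "f x = 1" for x
    unfolding d_def using that by (intro cInf_lower bdd_belowI[of _ 0]) auto
  have "\<exists>x. f x = 1 \<and> (norm x)\<^sup>2 < d + inverse (real (Suc n))" for n
    using cInf_lessD[of "(\<lambda>x. (norm x)\<^sup>2) ` {x. f x = 1}" "d + inverse (real (Suc n))"]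
      \<open>f x0 = 1\<close> unfolding d_def by auto
  then obtain xs where xs_level: "\<And>n. f (xs n) = 1"
    and xs_near: "\<And>n. (norm (xs n))\<^sup>2 < d + inverse (real (Suc n))"
    by metis
  have "4 * d \<le> (norm (xs m + xs n))\<^sup>2" for m n
  proof -
    have "f (scaleR (1/2) (xs m + xs n)) = 1"
      by (simp add: linear_scale[OF lin] linear_add[OF lin] xs_level scaleR_conv_of_real)
    from d_le[OF this] show ?thesis
      by (simp add: power_divide)
  qed
  then have "Cauchy xs"
    using xs_near by (intro minimizing_sequence_Cauchy[of d]) (auto intro: less_imp_le)
  then obtain w where w: "xs \<longlonglongrightarrow> w"
    using Cauchy_convergent_iff convergent_def by blast
  have "(\<lambda>n. f (xs n)) \<longlonglongrightarrow> f w"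
    using bounded_linear.tendsto[OF f w] .
  then have "f w = 1"
    using xs_level by (simp add: LIMSEQ_const_iff)
  moreover have "(norm w)\<^sup>2 \<le> d"
  proof (rule LIMSEQ_le)
    show "(\<lambda>n. (norm (xs n))\<^sup>2) \<longlonglongrightarrow> (norm w)\<^sup>2"
      by (intro tendsto_intros w)
    show "(\<lambda>n. d + inverse (real (Suc n))) \<longlonglongrightarrow> d"
      using tendsto_add[OF tendsto_const LIMSEQ_inverse_real_of_nat, of d] by simp
  qed (use xs_near less_imp_le in blast)
  ultimately show ?thesis
    using d_le by (intro that) (auto intro: power2_le_imp_le[OF order_trans])
qed

text \<open>The minimizer \<open>w\<close> is orthogonal to \<open>ker f\<close>, and \<open>x - f x w \<in> ker f\<close>.\<close>
lemma Riesz_representation: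
  fixes f :: "'a::chilbert_space \<Rightarrow> complex"
  assumes f: "bounded_linear f" and f_scaleC: "\<And>c x. f (scaleC c x) = c * f x"
  obtains z where "\<And>x. f x = cinner x z"
proof (cases "\<forall>x. f x = 0")
  case True
  then show ?thesis by (intro that[of 0]) simp
next
  case False
  have lin: "linear f"
    using f by (rule bounded_linear.linear)
  from False obtain x0 where "f x0 \<noteq> 0" by blast
  then have "f (scaleC (inverse (f x0)) x0) = 1" by (simp add: f_scaleC)
  then obtain w where w_level: "f w = 1" and w_min: "\<And>x. f x = 1 \<Longrightarrow> norm w \<le> norm x"
    using exists_min_norm_on_level_set[OF f] by blast
  have "w \<noteq> 0"
    using w_level linear_0[OF lin] by auto
  have "cinner x w = f x * of_real ((norm w)\<^sup>2)" for x
  proof -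
    define n where "n = x - scaleC (f x) w"
    have "f n = 0"
      unfolding n_def by (simp add: linear_diff[OF lin] f_scaleC w_level)
    then have "cinner w n = 0"
      by (intro orthogonal_if_norm_minimal w_min) (simp add: linear_add[OF lin] f_scaleC w_level)
    then have "cinner n w = 0"
      by (metis cinner_commute complex_cnj_zero)
    then show ?thesis
      unfolding n_def by (simp add: cinner_diff_left cinner_scaleC_left cinner_self_eq_norm_power2)
  qed
  then show ?thesis
    using \<open>w \<noteq> 0\<close>
    by (intro that[of "scaleC (of_real (1 / (norm w)\<^sup>2)) w"])
      (simp add: cinner_scaleC_right del: of_real_power)
qed

lemma cinner_right_injective:
  fixes y z :: "'a::complex_inner"
  assumes "\<And>x. cinner x y = cinner x z"
  shows "y = z"
proof -
  have "cinner (y - z) (y - z) = 0"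
    using assms[of "y - z"] by (simp add: cinner_diff_right)
  then show ?thesis
    by (simp add: cinner_self_eq_norm_power2)
qed

lemma cadjoint_eqI:
  assumes "\<And>x y. cinner (T x) y = cinner x (S y)"
  shows "cadjoint T = S"
  unfolding cadjoint_def
proof (rule the_equality)
  fix S'
  assume "\<forall>x y. cinner (T x) y = cinner x (S' y)"
  then show "S' = S"
    using assms by (intro ext cinner_right_injective) metis
qed (use assms in blast)

lemma bounded_linear_cinner_left_comp:
  assumes "bounded_clinear (T::'a::complex_inner \<Rightarrow> 'a)"
  shows "bounded_linear (\<lambda>x. cinner (T x) y)"
proof -
  from assms obtain K where K: "\<And>x. norm (T x) \<le> norm x * K"
    and add: "\<And>x y. T (x + y) = T x + T y" and scale: "\<And>c x. T (scaleC c x) = scaleC c (T x)"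
    unfolding bounded_clinear_def by blast
  show ?thesis
  proof (rule bounded_linear_intro[where K="K * norm y"])
    fix x
    have "cmod (cinner (T x) y) \<le> norm (T x) * norm y" by (rule norm_cinner_le)
    also have "\<dots> \<le> norm x * (K * norm y)"
      using mult_right_mono[OF K norm_ge_zero] by (simp add: mult.assoc)
    finally show "norm (cinner (T x) y) \<le> norm x * (K * norm y)" by simp
  qed (simp_all add: add scale cinner_add_left scaleR_scaleC cinner_scaleC_left scaleR_conv_of_real)
qed

lemma cinner_cadjoint:
  assumes "bounded_clinear (T::'a::chilbert_space \<Rightarrow> 'a)"
  shows "cinner (T x) y = cinner x (cadjoint T y)"
proof -
  have "\<exists>z. \<forall>x. cinner (T x) y = cinner x z" for y
  proof -
    have "T (scaleC c x) = scaleC c (T x)" for c x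
      using assms unfolding bounded_clinear_def by blast
    then obtain z where "\<And>x. cinner (T x) y = cinner x z"
      using Riesz_representation[OF bounded_linear_cinner_left_comp[OF assms]]
      by (metis cinner_scaleC_left)
    then show ?thesis by blast
  qed
  then obtain S where S: "\<And>x y. cinner (T x) y = cinner x (S y)"
    by metis
  then show ?thesis
    using cadjoint_eqI[of T S] by simp
qed

lemma cinner_cadjoint_left:
  assumes "bounded_clinear (T::'a::chilbert_space \<Rightarrow> 'a)"
  shows "cinner (cadjoint T y) x = cinner y (T x)"
  by (metis assms cinner_cadjoint cinner_commute)

lemma norm_cadjoint_le:
  assumes "bounded_clinear (T::'a::chilbert_space \<Rightarrow> 'a)"
  shows "norm (cadjoint T y) \<le> onorm T * norm y"
proof -
  define z where "z = cadjoint T y"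
  have lin: "bounded_linear T"
    using bounded_clinear_imp_bounded_linear[OF assms] .
  have "norm z * norm z = Re (cinner (T z) y)"
    by (simp add: z_def cinner_cadjoint[OF assms] norm_power2_eq_Re_cinner[symmetric] power2_eq_square)
  also have "\<dots> \<le> norm (T z) * norm y"
    using complex_Re_le_cmod norm_cinner_le order_trans by blast
  also have "\<dots> \<le> norm z * (onorm T * norm y)"
    using mult_right_mono[OF onorm[OF lin] norm_ge_zero] by (simp add: mult_ac)
  finally have "norm z * norm z \<le> norm z * (onorm T * norm y)" .
  then show ?thesis
    unfolding z_def[symmetric]
    by (cases "z = 0") (simp_all add: onorm_pos_le[OF lin] mult_le_cancel_left)
qed

lemma bounded_clinear_cadjoint:
  assumes "bounded_clinear (T::'a::chilbert_space \<Rightarrow> 'a)"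
  shows "bounded_clinear (cadjoint T)"
  unfolding bounded_clinear_def
proof (intro conjI allI)
  fix y z :: 'a and c :: complex
  show "cadjoint T (y + z) = cadjoint T y + cadjoint T z"
    by (intro cinner_right_injective)
      (simp add: cinner_cadjoint[OF assms, symmetric] cinner_add_right)
  show "cadjoint T (scaleC c y) = scaleC c (cadjoint T y)"
    by (intro cinner_right_injective)
      (simp add: cinner_cadjoint[OF assms, symmetric] cinner_scaleC_right)
  show "\<exists>K. \<forall>y. norm (cadjoint T y) \<le> norm y * K"
    using norm_cadjoint_le[OF assms] by (metis mult.commute)
qed

lemma bounded_clinear_comp:
  assumes S: "bounded_clinear (S::'b::complex_inner \<Rightarrow> 'c::complex_inner)"
    and T: "bounded_clinear (T::'a::complex_inner \<Rightarrow> 'b)"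
  shows "bounded_clinear (S \<circ> T)"
proof -
  have "bounded_linear (S \<circ> T)"
    unfolding comp_def
    by (rule bounded_linear_compose[OF bounded_clinear_imp_bounded_linear[OF S]
          bounded_clinear_imp_bounded_linear[OF T]])
  then have "\<exists>K. \<forall>x. norm ((S \<circ> T) x) \<le> norm x * K"
    by (rule bounded_linear.bounded)
  then show ?thesis
    using S T unfolding bounded_clinear_def by simp
qed

section \<open>Numerical radius\<close>

lemma
  fixes T :: "'a::complex_inner \<Rightarrow> 'a"
  assumes "bounded_linear T"
  shows numrad_nonneg: "0 \<le> numrad T"
    and cmod_cinner_le_numrad: "norm x = 1 \<Longrightarrow> cmod (cinner (T x) x) \<le> numrad T"
proof -
  have "cmod (cinner (T x) x) \<le> onorm T" if "norm x = 1" for x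
    using norm_cinner_le[of "T x" x] onorm[OF assms, of x] that by simp
  then have "bdd_above (insert 0 {cmod (cinner (T x) x) | x. norm x = 1})"
    by (intro bdd_aboveI[of _ "onorm T"]) (auto simp: onorm_pos_le[OF assms])
  then show "0 \<le> numrad T" and "norm x = 1 \<Longrightarrow> cmod (cinner (T x) x) \<le> numrad T"
    unfolding numrad_def by (auto intro: cSup_upper)
qed

lemma numrad_le:
  assumes "\<And>x. norm x = 1 \<Longrightarrow> cmod (cinner (T x) x) \<le> M" and "0 \<le> M"
  shows "numrad T \<le> M"
  unfolding numrad_def using assms by (intro cSup_least) auto

lemma cmod_cinner_cadjoint_comp_le:
  fixes A B :: "'a::chilbert_space \<Rightarrow> 'a"
  assumes A: "bounded_clinear A" and B: "bounded_clinear B" and "norm x = 1"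
  shows "2 * cmod (cinner (cadjoint A (B x)) x) \<le> onorm A * onorm B + numrad (B \<circ> cadjoint A)"
proof -
  have BA: "bounded_linear (B \<circ> cadjoint A)"
    using bounded_clinear_comp[OF B bounded_clinear_cadjoint[OF A]]
    by (rule bounded_clinear_imp_bounded_linear)
  have "0 \<le> onorm A" "0 \<le> onorm B"
    using A B by (simp_all add: onorm_pos_le bounded_clinear_imp_bounded_linear)
  have lhs: "cinner (cadjoint A (B x)) x = cinner (B x) (A x)"
    by (rule cinner_cadjoint_left[OF A])
  show ?thesis
  proof (cases "A x = 0")
    case True
    then show ?thesis
      using lhs numrad_nonneg[OF BA] \<open>0 \<le> onorm A\<close> \<open>0 \<le> onorm B\<close> by simp
  next
    case False
    define a where "a = norm (A x)"
    define y where "y = scaleC (of_real (1 / a)) (A x)"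
    have "a > 0" using False by (simp add: a_def)
    have Ax: "A x = scaleC (of_real a) y"
      unfolding y_def scaleC_scaleC using \<open>a > 0\<close> by (simp add: scaleC_one flip: of_real_mult)
    have "norm y = 1"
      using \<open>a > 0\<close> by (simp add: y_def norm_scaleC a_def norm_divide)
    have "cinner (cadjoint A y) x = of_real a"
      using \<open>norm y = 1\<close>
      by (simp add: cinner_cadjoint_left[OF A] Ax cinner_scaleC_right cinner_self_eq_norm_power2)
    then have "cinner (cadjoint A (B x)) x = cinner (cadjoint A y) x * cinner x (cadjoint B y)"
      by (simp add: lhs Ax cinner_scaleC_right cinner_cadjoint[OF B])
    then have "2 * cmod (cinner (cadjoint A (B x)) x)
        \<le> norm (cadjoint A y) * norm (cadjoint B y) + cmod (cinner (cadjoint A y) (cadjoint B y))"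
      using Buzano_inequality[OF \<open>norm x = 1\<close>, of "cadjoint A y" "cadjoint B y"] by simp
    also have "\<dots> \<le> onorm A * onorm B + numrad (B \<circ> cadjoint A)"
    proof (rule add_mono)
      show "norm (cadjoint A y) * norm (cadjoint B y) \<le> onorm A * onorm B"
        using norm_cadjoint_le[OF A, of y] norm_cadjoint_le[OF B, of y] \<open>norm y = 1\<close> \<open>0 \<le> onorm A\<close>
        by (intro mult_mono) simp_all
      show "cmod (cinner (cadjoint A y) (cadjoint B y)) \<le> numrad (B \<circ> cadjoint A)"
        using cmod_cinner_le_numrad[OF BA \<open>norm y = 1\<close>] by (simp add: cinner_cadjoint[OF B])
    qed
    finally show ?thesis .
  qed
qed

lemma numrad_cadjoint_comp_le:
  fixes A B :: "'a::chilbert_space \<Rightarrow> 'a"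
  assumes A: "bounded_clinear A" and B: "bounded_clinear B"
  shows "numrad (cadjoint A \<circ> B) \<le> (onorm A * onorm B + numrad (B \<circ> cadjoint A)) / 2"
proof (rule numrad_le)
  show "cmod (cinner ((cadjoint A \<circ> B) x) x) \<le> (onorm A * onorm B + numrad (B \<circ> cadjoint A)) / 2"
    if "norm x = 1" for x
    using cmod_cinner_cadjoint_comp_le[OF A B that] by simp
  have "bounded_linear (B \<circ> cadjoint A)"
    using bounded_clinear_comp[OF B bounded_clinear_cadjoint[OF A]]
    by (rule bounded_clinear_imp_bounded_linear)
  then have "0 \<le> numrad (B \<circ> cadjoint A)"
    by (rule numrad_nonneg)
  moreover have "0 \<le> onorm A" "0 \<le> onorm B"
    using A B by (simp_all add: onorm_pos_le bounded_clinear_imp_bounded_linear)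
  ultimately show "0 \<le> (onorm A * onorm B + numrad (B \<circ> cadjoint A)) / 2"
    by simp
qed

lemma powr_half_sum_le:
  fixes a b p :: real
  assumes "0 \<le> a" and "0 \<le> b" and "1 \<le> p"
  shows "((a + b) / 2) powr p \<le> 1/2 * a powr p + 1/2 * b powr p"
proof (cases "a = 0 \<or> b = 0")
  case True
  have "2 powr 1 \<le> (2::real) powr p"
    using \<open>1 \<le> p\<close> by (intro powr_mono) auto
  then have "(c / 2) powr p \<le> 1/2 * c powr p" if "0 \<le> c" for c :: real
    using that divide_left_mono[of 2 "2 powr p" "c powr p"] by (simp add: powr_divide)
  then show ?thesis
    using True assms by auto
next
  case False
  then have "a > 0" "b > 0"
    using assms by auto
  then have "((1 - 1/2) *\<^sub>R a + (1/2) *\<^sub>R b) powr p \<le> (1 - 1/2) * a powr p + (1/2) * b powr p"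
    by (intro convex_onD[OF powr_convex[OF \<open>1 \<le> p\<close>]]) auto
  then show ?thesis
    by (simp add: field_simps)
qed

theorem mainTheorem5:
  fixes A B :: "'a::chilbert_space \<Rightarrow> 'a" and p :: real
  assumes "bounded_clinear A" and "bounded_clinear B" and "p \<ge> 1"
  shows "numrad (cadjoint A \<circ> B) powr p
           \<le> 1/2 * onorm A powr p * onorm B powr p + 1/2 * numrad (B \<circ> cadjoint A) powr p"
proof -
  have As: "bounded_clinear (cadjoint A)"
    using assms(1) by (rule bounded_clinear_cadjoint)
  have "0 \<le> numrad (cadjoint A \<circ> B)" "0 \<le> numrad (B \<circ> cadjoint A)"
    using bounded_clinear_comp[OF As assms(2)] bounded_clinear_comp[OF assms(2) As]
    by (simp_all add: numrad_nonneg bounded_clinear_imp_bounded_linear)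
  moreover have "0 \<le> onorm A" "0 \<le> onorm B"
    using assms by (simp_all add: onorm_pos_le bounded_clinear_imp_bounded_linear)
  ultimately have "numrad (cadjoint A \<circ> B) powr p
      \<le> ((onorm A * onorm B + numrad (B \<circ> cadjoint A)) / 2) powr p"
    using numrad_cadjoint_comp_le[OF assms(1,2)] \<open>p \<ge> 1\<close> by (intro powr_mono2) simp_all
  also have "\<dots> \<le> 1/2 * (onorm A * onorm B) powr p + 1/2 * numrad (B \<circ> cadjoint A) powr p"
    using \<open>0 \<le> onorm A\<close> \<open>0 \<le> onorm B\<close> \<open>0 \<le> numrad (B \<circ> cadjoint A)\<close> \<open>p \<ge> 1\<close>
    by (intro powr_half_sum_le) simp_all
  finally show ?thesis
    using \<open>0 \<le> onorm A\<close> \<open>0 \<le> onorm B\<close> by (simp add: powr_mult mult.assoc)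
qed

end
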